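(* Let $k_1,k_2,k_1',k_2'\ge0$ be integers. Then (i) $(1+t)^{k_1}(1-t)^{k_2}\doteq1$ if and only if $k_1=k_2=0$; (ii) $(1+t)^{k_1}(1-t)^{k_2}\doteq(1+t)^{k_1'}(1-t)^{k_2'}$ if and only if $k_1=k_1'$ and $k_2=k_2'$.
   Context: Let $I_t$ be the ideal of $\mathbb Z[t^{\pm1/2}]$ generated by $\frac{t^5+1}{t+1}=t^4-t^3+t^2-t+1$. For $f,g\in\mathbb Z[t^{\pm1/2}]$ write $f\doteq g$ if $f\equiv\pm t^{i/2}g\pmod{I_t}$ for some sign and some integer $i$. *)

theory Defs
  imports "HOL-Computational_Algebra.Formal_Laurent_Series"
begin

text \<open>We write s = t^(1/2). The ring Z[t^(+-1/2)] = Z[s, s^-1] is realised as the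
  subring of integer formal Laurent series in s with finite support.\<close>

definition laurent_poly :: "int fls \<Rightarrow> bool" where
  "laurent_poly f \<longleftrightarrow> finite {n. fls_nth f n \<noteq> 0}"

definition tt :: "int fls" where
  "tt = fls_X ^ 2"

definition Phi10 :: "int fls" where
  "Phi10 = tt^4 - tt^3 + tt^2 - tt + 1"

definition I_t :: "int fls set" where
  "I_t = {q * Phi10 | q. laurent_poly q}"

text \<open>f doteq g iff f = +- t^(i/2) g mod I_t, i.e. +- s^i g.\<close>
definition doteq :: "int fls \<Rightarrow> int fls \<Rightarrow> bool" where
  "doteq f g \<longleftrightarrow> (\<exists>\<epsilon>\<in>{1, -1::int fls}. \<exists>i::int. f - \<epsilon> * fls_X_intpow i * g \<in> I_t)"

end

theory Submission
  imports Defs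
begin

text \<open>Substitute for \<open>s\<close> a complex number \<open>z\<close> of modulus one whose square \<open>w\<close> is a primitive
  10th root of unity. This kills \<open>I_t\<close> and turns the ambiguity \<open>\<plusminus>s^i\<close> into a factor of
  modulus one, so \<open>\<doteq>\<close>-equivalent elements have equal modulus at \<open>z\<close>. For \<open>w = exp (k i pi / 5)\<close>
  with \<open>k = 1, 3\<close> one has \<open>|1 + w|^2 = 2 + \<sigma>\<close> and \<open>|1 - w|^2 = 2 - \<sigma>\<close>, where \<open>\<sigma> = w + 1/w\<close>
  runs through the two roots \<open>\<sigma>, \<tau>\<close> of \<open>x^2 = x + 1\<close>. Since \<open>(2 + \<sigma>) (2 + \<tau>) = 5\<close> and
  \<open>(2 - \<sigma>) (2 - \<tau>) = 1\<close>, multiplying the two resulting identities gives \<open>5^k\<^sub>1 = 5^k\<^sub>1'\<close>;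
  then \<open>k\<^sub>2 = k\<^sub>2'\<close> because \<open>0 < 2 - \<sigma> < 1\<close> for the golden ratio \<open>\<sigma>\<close>.\<close>

definition fls_of_poly :: "'a::comm_ring_1 poly \<Rightarrow> 'a fls" where
  "fls_of_poly p = fps_to_fls (fps_of_poly p)"

lemma fls_of_poly_1 [simp]: "fls_of_poly 1 = 1"
  and fls_of_poly_add [simp]: "fls_of_poly (p + q) = fls_of_poly p + fls_of_poly q"
  and fls_of_poly_diff [simp]: "fls_of_poly (p - q) = fls_of_poly p - fls_of_poly q"
  and fls_of_poly_uminus [simp]: "fls_of_poly (- p) = - fls_of_poly p"
  and fls_of_poly_mult [simp]: "fls_of_poly (p * q) = fls_of_poly p * fls_of_poly q"
  and fls_of_poly_power [simp]: "fls_of_poly (p ^ n) = fls_of_poly p ^ n"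
  and fls_of_poly_monom [simp]: "fls_of_poly (monom 1 n) = fls_X ^ n"
  by (simp_all add: fls_of_poly_def fps_of_poly_add fps_of_poly_diff fps_of_poly_uminus
      fps_of_poly_mult fls_times_fps_to_fls fps_of_poly_power fps_to_fls_power fps_of_poly_monom')

lemma fls_of_poly_inject: "fls_of_poly p = fls_of_poly q \<longleftrightarrow> p = q"
  by (simp add: fls_of_poly_def fps_of_poly_eq_iff)

lemma fls_X_intpow_of_nat: "fls_X_intpow (int n) = (fls_X ^ n :: 'a::semiring_1 fls)"
  by (simp add: fls_X_power_conv_shift_1)

lemma laurent_poly_shift_to_poly:
  assumes "laurent_poly q"
  obtains N p where "K \<le> int N" "fls_X_intpow (int N) * q = fls_of_poly p"
proof -
  define S where "S = {n. fls_nth q n \<noteq> 0}"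
  have "finite S" using assms by (simp add: laurent_poly_def S_def)
  then obtain L U where L: "\<And>n. n \<in> S \<Longrightarrow> L \<le> n" and U: "\<And>n. n \<in> S \<Longrightarrow> n \<le> U"
    by (meson bdd_below_finite bdd_above_finite bdd_below_def bdd_above_def)
  define N where "N = nat (max K (-L))"
  define p where "p = Abs_poly (\<lambda>k. fls_nth q (int k - int N))"
  have coeff_p: "coeff p k = fls_nth q (int k - int N)" for k
    unfolding p_def
  proof (rule fun_cong[OF coeff_Abs_poly[where n = "nat (U + int N)"]])
    fix i assume "i > nat (U + int N)"
    hence "int i - int N \<notin> S" using U by force
    thus "fls_nth q (int i - int N) = 0" by (simp add: S_def)
  qed
  have "fls_X_intpow (int N) * q = fls_of_poly p"
  proof (rule fls_eqI)
    fix n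
    have "n - int N \<notin> S" if "n < 0" using L[of "n - int N"] that by (auto simp: N_def)
    then show "fls_nth (fls_X_intpow (int N) * q) n = fls_nth (fls_of_poly p) n"
      by (cases "n < 0") (auto simp: fls_X_intpow_times_conv_shift fls_of_poly_def S_def coeff_p)
  qed
  moreover have "K \<le> int N" by (simp add: N_def) linarith
  ultimately show thesis using that by blast
qed

lemma map_poly_of_int_add:
  "map_poly (of_int :: int \<Rightarrow> 'a::comm_ring_1) (p + q) = map_poly of_int p + map_poly of_int q"
  by (simp add: poly_eq_iff coeff_map_poly)

lemma map_poly_of_int_diff:
  "map_poly (of_int :: int \<Rightarrow> 'a::comm_ring_1) (p - q) = map_poly of_int p - map_poly of_int q"
  by (simp add: poly_eq_iff coeff_map_poly)

lemma map_poly_of_int_uminus: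
  "map_poly (of_int :: int \<Rightarrow> 'a::comm_ring_1) (- p) = - map_poly of_int p"
  by (simp add: poly_eq_iff coeff_map_poly)

lemma map_poly_of_int_mult:
  "map_poly (of_int :: int \<Rightarrow> 'a::comm_ring_1) (p * q) = map_poly of_int p * map_poly of_int q"
  by (simp add: poly_eq_iff coeff_map_poly coeff_mult of_int_sum)

lemma map_poly_of_int_power:
  "map_poly (of_int :: int \<Rightarrow> 'a::comm_ring_1) (p ^ n) = map_poly of_int p ^ n"
  by (induction n) (simp_all add: map_poly_of_int_mult)

lemmas map_poly_of_int_hom =
  map_poly_of_int_add map_poly_of_int_diff map_poly_of_int_uminus map_poly_of_int_mult
  map_poly_of_int_power

definition tt_poly :: "int poly" where
  "tt_poly = monom 1 2"

definition Phi10_poly :: "int poly" where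
  "Phi10_poly = tt_poly ^ 4 - tt_poly ^ 3 + tt_poly ^ 2 - tt_poly + 1"

lemma fls_of_tt_poly [simp]: "fls_of_poly tt_poly = tt"
  by (simp add: tt_poly_def tt_def)

lemma fls_of_Phi10_poly: "fls_of_poly Phi10_poly = Phi10"
  by (simp add: Phi10_poly_def Phi10_def)

lemma poly_tt_poly [simp]:
  fixes z :: "'a::comm_ring_1"
  shows "poly (map_poly of_int tt_poly) z = z ^ 2"
  by (simp add: tt_poly_def map_poly_monom poly_monom)

lemma poly_Phi10_poly:
  fixes z :: "'a::comm_ring_1"
  shows "poly (map_poly of_int Phi10_poly) z = (z^2)^4 - (z^2)^3 + (z^2)^2 - z^2 + 1"
  by (simp add: Phi10_poly_def map_poly_of_int_hom)

lemma doteq_refl: "doteq f f"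
proof -
  have "f - 1 * fls_X_intpow 0 * f \<in> I_t"
    by (auto simp: I_t_def laurent_poly_def intro!: exI[of _ 0])
  then show ?thesis unfolding doteq_def by blast
qed

text \<open>Clearing the denominator \<open>s^N\<close> of the cofactor turns a relation \<open>\<doteq>\<close> between polynomials
  into a polynomial identity.\<close>

lemma doteq_imp_poly_identity:
  assumes "doteq (fls_of_poly P) (fls_of_poly Q)"
  obtains N m e p where "e = 1 \<or> e = -1" "monom 1 N * P - e * monom 1 m * Q = p * Phi10_poly"
proof -
  obtain \<epsilon> i q where \<epsilon>: "\<epsilon> \<in> {1, -1}" and q: "laurent_poly q"
    and rel: "fls_of_poly P - \<epsilon> * fls_X_intpow i * fls_of_poly Q = q * Phi10"
    using assms unfolding doteq_def I_t_def by blast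
  obtain N p where N: "- i \<le> int N" and p: "fls_X_intpow (int N) * q = fls_of_poly p"
    using laurent_poly_shift_to_poly[OF q] by blast
  define m where "m = nat (int N + i)"
  define e :: "int poly" where "e = (if \<epsilon> = 1 then 1 else -1)"
  have e: "fls_of_poly e = \<epsilon>" using \<epsilon> by (auto simp: e_def)
  have Xm: "fls_X_intpow (int N) * fls_X_intpow i = (fls_X ^ m :: int fls)"
    using N by (simp add: fls_X_intpow_times_fls_X_intpow m_def flip: fls_X_intpow_of_nat)
  have "fls_of_poly (monom 1 N * P - e * monom 1 m * Q)
      = fls_X_intpow (int N) * (fls_of_poly P - \<epsilon> * fls_X_intpow i * fls_of_poly Q)"
    by (simp add: e fls_X_intpow_of_nat algebra_simps flip: Xm)
  also have "\<dots> = (fls_X_intpow (int N) * q) * Phi10"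
    unfolding rel by (rule mult.assoc[symmetric])
  also have "\<dots> = fls_of_poly (p * Phi10_poly)"
    by (simp only: p fls_of_poly_mult fls_of_Phi10_poly)
  finally have "monom 1 N * P - e * monom 1 m * Q = p * Phi10_poly"
    by (simp only: fls_of_poly_inject)
  moreover have "e = 1 \<or> e = -1" by (simp add: e_def)
  ultimately show thesis using that by blast
qed

lemma doteq_imp_norm_poly_eq:
  fixes z :: "'a::real_normed_field"
  assumes "doteq (fls_of_poly P) (fls_of_poly Q)"
    and z: "norm z = 1" and root: "poly (map_poly of_int Phi10_poly) z = 0"
  shows "norm (poly (map_poly of_int P) z) = norm (poly (map_poly of_int Q) z)"
proof -
  obtain N m e p where e: "e = 1 \<or> e = -1"
    and eq: "monom 1 N * P - e * monom 1 m * Q = p * Phi10_poly"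
    by (rule doteq_imp_poly_identity[OF assms(1)])
  have unit_e: "norm (poly (map_poly (of_int :: int \<Rightarrow> 'a) e) z) = 1"
    using e by (auto simp: map_poly_of_int_uminus)
  have "poly (map_poly of_int (monom 1 N * P - e * monom 1 m * Q)) z
      = poly (map_poly of_int (p * Phi10_poly)) z"
    by (simp only: eq)
  then have "z ^ N * poly (map_poly of_int P) z
      = poly (map_poly of_int e) z * z ^ m * poly (map_poly of_int Q) z"
    using root by (simp add: map_poly_of_int_hom map_poly_monom poly_monom)
  then have "norm (z ^ N * poly (map_poly of_int P) z)
      = norm (poly (map_poly of_int e) z * z ^ m * poly (map_poly of_int Q) z)"
    by (rule arg_cong)
  then show ?thesis by (simp only: norm_mult norm_power z unit_e power_one mult_1)
qed

lemma quartic_root_of_fifth_root_of_minus_one: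
  fixes w :: "'a::idom"
  assumes "w ^ 5 = -1" "w \<noteq> -1"
  shows "w^4 - w^3 + w^2 - w + 1 = 0"
proof -
  have "(w + 1) * (w^4 - w^3 + w^2 - w + 1) = w^5 + 1" by algebra
  with assms show ?thesis by (simp add: add_eq_0_iff2)
qed

text \<open>For \<open>|w| = 1\<close> the quartic equals \<open>w^2 (\<sigma>^2 - \<sigma> - 1)\<close> with \<open>\<sigma> = w + 1/w = 2 Re w\<close>.\<close>

lemma unit_quartic_root_Re:
  fixes w :: complex
  assumes "cmod w = 1" "w^4 - w^3 + w^2 - w + 1 = 0"
  shows "(2 * Re w)^2 = 2 * Re w + 1"
proof -
  have "w * cnj w = 1" using assms(1) by (simp add: complex_norm_square[symmetric])
  then have "w^2 * ((w + cnj w)^2 - (w + cnj w) - 1) = w^4 - w^3 + w^2 - w + 1"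
    by algebra
  with assms have "(w + cnj w)^2 - (w + cnj w) - 1 = 0" by auto
  moreover have "w + cnj w = of_real (2 * Re w)" by (simp add: complex_add_cnj)
  ultimately have "of_real ((2 * Re w)^2 - 2 * Re w - 1) = (0::complex)"
    by (metis of_real_1 of_real_diff of_real_power)
  then have "(2 * Re w)^2 - 2 * Re w - 1 = 0" by (simp only: of_real_eq_0_iff)
  then show ?thesis by simp
qed

lemma cmod_one_plus_minus_unit:
  assumes "cmod w = 1"
  shows "cmod (1 + w)^2 = 2 + 2 * Re w" "cmod (1 - w)^2 = 2 - 2 * Re w"
proof -
  have "Re w ^ 2 + Im w ^ 2 = 1" using assms cmod_power2[of w] by simp
  then show "cmod (1 + w)^2 = 2 + 2 * Re w" "cmod (1 - w)^2 = 2 - 2 * Re w"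
    unfolding cmod_power2 by (simp_all add: power2_eq_square algebra_simps)
qed

lemma quartic_root_cis_odd_pi_div_5:
  fixes k :: nat
  assumes "odd k" "k < 5"
  shows "cis (k * pi / 5)^4 - cis (k * pi / 5)^3 + cis (k * pi / 5)^2 - cis (k * pi / 5) + 1 = 0"
proof (rule quartic_root_of_fifth_root_of_minus_one)
  have "cis (k * pi / 5)^5 = cis (k * pi)" by (simp add: DeMoivre)
  also have "\<dots> = cis pi ^ k" by (simp only: DeMoivre)
  finally show "cis (k * pi / 5)^5 = -1" using assms(1) by simp
  have "0 < sin (k * pi / 5)" using assms odd_pos by (intro sin_gt_zero) auto
  then show "cis (k * pi / 5) \<noteq> -1" by (auto simp: complex_eq_iff)
qed

lemma doteq_imp_golden_identity:
  fixes k :: nat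
  assumes rel: "doteq ((1 + tt)^a * (1 - tt)^b) ((1 + tt)^a' * (1 - tt)^b')"
    and k: "odd k" "k < 5"
  defines "\<sigma> \<equiv> 2 * cos (k * pi / 5)"
  shows "\<sigma>^2 = \<sigma> + 1" "(2 + \<sigma>)^a * (2 - \<sigma>)^b = (2 + \<sigma>)^a' * (2 - \<sigma>)^b'"
proof -
  define w where "w = cis (k * pi / 5)"
  define z where "z = cis (k * pi / 10)"
  have "z^2 = w" by (simp add: z_def w_def DeMoivre mult.commute)
  have w4: "w^4 - w^3 + w^2 - w + 1 = 0"
    using quartic_root_cis_odd_pi_div_5[OF k] by (simp add: w_def)
  have "\<sigma> = 2 * Re w" by (simp add: \<sigma>_def w_def)
  then show "\<sigma>^2 = \<sigma> + 1" using unit_quartic_root_Re[OF _ w4] by (simp add: w_def)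
  have unit: "cmod w = 1" by (simp add: w_def)
  have "norm (poly (map_poly of_int ((1 + tt_poly)^a * (1 - tt_poly)^b)) z)
      = norm (poly (map_poly of_int ((1 + tt_poly)^a' * (1 - tt_poly)^b')) z)"
    using rel w4 \<open>z^2 = w\<close>
    by (intro doteq_imp_norm_poly_eq) (simp_all add: poly_Phi10_poly z_def)
  then have "cmod (1 + w)^a * cmod (1 - w)^b = cmod (1 + w)^a' * cmod (1 - w)^b'"
    by (simp add: map_poly_of_int_hom norm_mult norm_power \<open>z^2 = w\<close>)
  then have "(cmod (1 + w)^a * cmod (1 - w)^b)^2 = (cmod (1 + w)^a' * cmod (1 - w)^b')^2"
    by simp
  moreover have "(x^n * y^m)^2 = (x^2)^n * (y^2)^m" for x y :: real and n m :: nat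
    by (simp add: power_mult_distrib flip: power_mult) (simp add: mult.commute)
  ultimately have "(cmod (1 + w)^2)^a * (cmod (1 - w)^2)^b = (cmod (1 + w)^2)^a' * (cmod (1 - w)^2)^b'"
    by simp
  then show "(2 + \<sigma>)^a * (2 - \<sigma>)^b = (2 + \<sigma>)^a' * (2 - \<sigma>)^b'"
    by (simp only: cmod_one_plus_minus_unit[OF unit] \<open>\<sigma> = 2 * Re w\<close>)
qed

lemma golden_exponents_unique:
  fixes \<sigma> \<tau> :: real
  assumes "\<sigma>^2 = \<sigma> + 1" "\<tau>^2 = \<tau> + 1" "\<tau> < 0" "0 < \<sigma>"
    and \<sigma>_eq: "(2 + \<sigma>)^a * (2 - \<sigma>)^b = (2 + \<sigma>)^a' * (2 - \<sigma>)^b'"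
    and \<tau>_eq: "(2 + \<tau>)^a * (2 - \<tau>)^b = (2 + \<tau>)^a' * (2 - \<tau>)^b'"
  shows "a = a' \<and> b = b'"
proof -
  have "(\<sigma> - \<tau>) * (\<sigma> + \<tau> - 1) = 0" using assms(1,2) by algebra
  then have sum: "\<sigma> + \<tau> = 1" using assms(3,4) by simp
  then have prod: "\<sigma> * \<tau> = -1" using assms(1) by algebra
  have plus: "(2 + \<sigma>) * (2 + \<tau>) = 5" and minus: "(2 - \<sigma>) * (2 - \<tau>) = 1"
    using sum prod by algebra+
  have split: "((2 + \<sigma>) * (2 + \<tau>))^n * ((2 - \<sigma>) * (2 - \<tau>))^m
      = ((2 + \<sigma>)^n * (2 - \<sigma>)^m) * ((2 + \<tau>)^n * (2 - \<tau>)^m)" for n m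
    by (simp add: power_mult_distrib mult_ac)
  have "(5::real)^a = 5^a'"
    using split[of a b] split[of a' b'] \<sigma>_eq \<tau>_eq by (simp add: plus minus)
  then have a: "a = a'" by simp
  have "2 < 2 - \<tau>" using assms(3) by simp
  then have "0 < 2 - \<sigma>" using minus by (smt (verit) zero_less_mult_pos2)
  moreover have "2 - \<sigma> < 1"
    using mult_strict_left_mono[OF \<open>2 < 2 - \<tau>\<close> \<open>0 < 2 - \<sigma>\<close>] minus by simp
  moreover have "(2 - \<sigma>)^b = (2 - \<sigma>)^b'" using \<sigma>_eq assms(4) by (simp add: a)
  ultimately have "b = b'" by (metis linorder_neq_iff power_strict_decreasing_iff less_irrefl)
  with a show ?thesis by simp
qed

lemma doteq_tt_products_imp_eq:
  assumes "doteq ((1 + tt)^a * (1 - tt)^b) ((1 + tt)^a' * (1 - tt)^b')"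
  shows "a = a' \<and> b = b'"
proof (rule golden_exponents_unique)
  show "0 < 2 * cos (1 * pi / 5)" using pi_gt_zero by (simp, intro cos_gt_zero_pi; linarith)
  have "cos (3 * pi / 5) = - cos (2 * pi / 5)"
    using cos_pi_minus[of "2 * pi / 5"] by (simp add: field_simps)
  moreover have "0 < cos (2 * pi / 5)" using pi_gt_zero by (intro cos_gt_zero_pi; linarith)
  ultimately show "2 * cos (3 * pi / 5) < 0" by simp
qed (use doteq_imp_golden_identity[OF assms, of 1] doteq_imp_golden_identity[OF assms, of 3] in simp_all)

theorem lemma6p1:
  fixes k1 k2 k1' k2' :: nat
  shows "(doteq ((1 + tt) ^ k1 * (1 - tt) ^ k2) 1 \<longleftrightarrow> k1 = 0 \<and> k2 = 0)
       \<and> (doteq ((1 + tt) ^ k1 * (1 - tt) ^ k2) ((1 + tt) ^ k1' * (1 - tt) ^ k2')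
            \<longleftrightarrow> k1 = k1' \<and> k2 = k2')"
proof -
  have "doteq ((1 + tt)^k1 * (1 - tt)^k2) ((1 + tt)^a * (1 - tt)^b) \<longleftrightarrow> k1 = a \<and> k2 = b" for a b
    using doteq_tt_products_imp_eq doteq_refl by blast
  from this[of 0 0] this[of k1' k2'] show ?thesis by simp
qed

end
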